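(* For integers $d \ge 1$ and $n \ge 0$ define $$\widehat{\mathcal{I}}_{d,n} := n^d \int_{[0,1)^d} \Big[\prod_{j=1}^d (1-x_j)\Big]^{d-1} \exp\Big[-n \prod_{j=1}^d (1-x_j)\Big] \, dx_1\cdots dx_d.$$ Then for fixed $d$, as $n \to \infty$, $$\widehat{\mathcal{I}}_{d,n} = (\ln n)^{d-1} \sum_{j=0}^{d-1} \frac{(-1)^j \Gamma^{(j)}(d)}{j!\,(d-1-j)!} (\ln n)^{-j} + O\big((n \ln n)^{d-1} e^{-n}\big),$$ where $\Gamma^{(j)}$ denotes the $j$-th derivative of the Gamma function. *)

theory Defs
  imports "HOL-Analysis.Analysis" "HOL-Library.Landau_Symbols"
begin

definition Ihat :: "'d::finite itself \<Rightarrow> nat \<Rightarrow> real" where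
  "Ihat _ n = real n ^ CARD('d) *
     integral {x :: real^'d. \<forall>i. 0 \<le> x $ i \<and> x $ i < 1}
       (\<lambda>x. (\<Prod>i\<in>UNIV. 1 - x $ i) ^ (CARD('d) - 1) *
            exp (- real n * (\<Prod>i\<in>UNIV. 1 - x $ i)))"

end

theory Submission
  imports Defs
begin

text \<open>If x is uniformly distributed on [0,1)^d, then u = \<Prod>(1 - x_i) has density
  (-ln u)^(d-1)/(d-1)! on (0,1], and the substitution t = n u turns \<widehat>I_{d,n} into the
  integral of t^(d-1) e^(-t) (ln n - ln t)^(d-1)/(d-1)! over (0,n]. Over all of (0,\<infinity>) the
  binomial theorem evaluates this integral exactly to the asserted sum, because differentiation
  under the integral sign gives \<Gamma>^(j)(d) = \<integral>_0^\<infinity> (ln t)^j t^(d-1) e^(-t) dt.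
  On (n,\<infinity>) one has t (ln t - ln n) \<le> (1 + t - n)^2, so that part is O(e^(-n)).\<close>

section \<open>Derivatives of the Gamma function as integrals\<close>

lemma power_div_fact_le_exp:
  fixes y :: real assumes "0 \<le> y" shows "y ^ k / fact k \<le> exp y"
proof -
  have s: "(\<lambda>n. y^n /\<^sub>R fact n) sums exp y" by (rule exp_converges)
  have "sum (\<lambda>n. y^n /\<^sub>R fact n) {k} \<le> suminf (\<lambda>n. y^n /\<^sub>R fact n)"
    by (rule sum_le_suminf) (use s assms in \<open>auto simp: sums_iff\<close>)
  thus ?thesis using s by (simp add: sums_iff divide_inverse mult.commute)
qed

lemma abs_ln_power_le_powr:
  fixes t e :: real assumes "t > 0" "e > 0"
  shows "\<bar>ln t\<bar> ^ k \<le> fact k / e ^ k * (t powr e + t powr (-e))"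
proof -
  have "(e * \<bar>ln t\<bar>) ^ k / fact k \<le> exp (e * \<bar>ln t\<bar>)"
    using assms by (intro power_div_fact_le_exp) auto
  also have "exp (e * \<bar>ln t\<bar>) \<le> t powr e + t powr (-e)"
    using assms by (cases "ln t \<ge> 0") (auto simp: powr_def abs_if)
  finally have "e ^ k * \<bar>ln t\<bar> ^ k \<le> fact k * (t powr e + t powr (-e))"
    by (simp add: power_mult_distrib field_simps)
  thus ?thesis using assms by (simp add: field_simps)
qed

lemma abs_exp_diff_le: "\<bar>exp a - exp b\<bar> \<le> \<bar>a - b\<bar> * max (exp a) (exp b)" for a b :: real
proof -
  have *: "exp a - exp b \<le> (a - b) * exp a" if "b \<le> a" for a b :: real
  proof -
    have "exp a * (1 + (b - a)) \<le> exp a * exp (b - a)"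
      by (intro mult_left_mono exp_ge_add_one_self) auto
    thus ?thesis by (simp add: exp_diff algebra_simps)
  qed
  show ?thesis
    using *[of b a] *[of a b] by (cases "b \<le> a") (auto simp: max_def abs_if)
qed

lemma abs_powr_diff_le:
  fixes t x y e :: real
  assumes "t > 0" "\<bar>y - x\<bar> \<le> e"
  shows "\<bar>t powr (y - 1) - t powr (x - 1)\<bar>
           \<le> \<bar>y - x\<bar> * (\<bar>ln t\<bar> * (t powr (x - e - 1) + t powr (x + e - 1)))"
proof -
  have between: "exp (c * ln t) \<le> t powr (x - e - 1) + t powr (x + e - 1)"
    if "x - e - 1 \<le> c" "c \<le> x + e - 1" for c
  proof (cases "ln t \<ge> 0")
    case True
    hence "exp (c * ln t) \<le> t powr (x + e - 1)"
      using that \<open>t > 0\<close> by (simp add: powr_def mult_right_mono)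
    thus ?thesis by (smt (verit) powr_ge_zero)
  next
    case False
    hence "exp (c * ln t) \<le> t powr (x - e - 1)"
      using that \<open>t > 0\<close> by (simp add: powr_def mult_right_mono_neg)
    thus ?thesis by (smt (verit) powr_ge_zero)
  qed
  have "\<bar>t powr (y - 1) - t powr (x - 1)\<bar> = \<bar>exp ((y - 1) * ln t) - exp ((x - 1) * ln t)\<bar>"
    using assms by (simp add: powr_def)
  also have "\<dots> \<le> \<bar>(y - 1) * ln t - (x - 1) * ln t\<bar> * max (exp ((y - 1) * ln t)) (exp ((x - 1) * ln t))"
    by (rule abs_exp_diff_le)
  also have "(y - 1) * ln t - (x - 1) * ln t = (y - x) * ln t"
    by (simp add: algebra_simps)
  also have "\<bar>(y - x) * ln t\<bar> * max (exp ((y - 1) * ln t)) (exp ((x - 1) * ln t))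
      \<le> \<bar>(y - x) * ln t\<bar> * (t powr (x - e - 1) + t powr (x + e - 1))"
    using assms by (intro mult_left_mono max.boundedI between) auto
  finally show ?thesis by (simp only: abs_mult mult.assoc)
qed

lemma integrable_Gamma_kernel:
  assumes "a > 0"
  shows "integrable lborel (\<lambda>t::real. indicator {0<..} t * (t powr (a - 1) * exp (- t)))"
proof (rule integrableI_nonneg)
  have "(\<integral>\<^sup>+ t. ennreal (indicator {0<..} t * (t powr (a - 1) * exp (- t))) \<partial>lborel)
      = (\<integral>\<^sup>+ t. ennreal (indicator {0..} t * t powr (a - 1) / exp t) \<partial>lborel)"
    by (intro nn_integral_cong) (auto simp: indicator_def exp_minus field_simps)
  also have "\<dots> = ennreal (Gamma a)" using Gamma_conv_nn_integral_real[OF assms] by simp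
  finally show "(\<integral>\<^sup>+ t. ennreal (indicator {0<..} t * (t powr (a - 1) * exp (- t))) \<partial>lborel) < \<infinity>"
    by simp
qed (auto simp: indicator_def intro!: AE_I2)

lemma integrable_abs_ln_power_Gamma_kernel:
  assumes "a > 0"
  shows "integrable lborel (\<lambda>t::real. indicator {0<..} t * (\<bar>ln t\<bar> ^ k * t powr (a - 1) * exp (- t)))"
proof -
  define e where "e = a / 2"
  have e: "e > 0" "a - e > 0" using assms by (auto simp: e_def)
  define C where "C = fact k / e ^ k"
  let ?g = "\<lambda>c t::real. indicator {0<..} t * (t powr (c - 1) * exp (- t))"
  have int: "integrable lborel (\<lambda>t. C * (?g (a + e) t + ?g (a - e) t))"
    using e assms by (intro Bochner_Integration.integrable_mult_right Bochner_Integration.integrable_add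
        integrable_Gamma_kernel) auto
  have "norm (indicator {0<..} t * (\<bar>ln t\<bar> ^ k * t powr (a - 1) * exp (- t)))
      \<le> norm (C * (?g (a + e) t + ?g (a - e) t))" for t :: real
  proof (cases "t > 0")
    case True
    have "\<bar>ln t\<bar> ^ k * (t powr (a - 1) * exp (- t))
        \<le> C * (t powr e + t powr (- e)) * (t powr (a - 1) * exp (- t))"
      using abs_ln_power_le_powr[OF True e(1)] by (intro mult_right_mono) (auto simp: C_def)
    also have "\<dots> = C * (?g (a + e) t + ?g (a - e) t)"
      using True by (simp add: powr_add[symmetric] algebra_simps)
    also have "\<dots> \<le> norm (C * (?g (a + e) t + ?g (a - e) t))"
      by simp
    finally show ?thesis using True by (simp add: indicator_def abs_mult mult.assoc)
  qed (simp add: indicator_def)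
  then show ?thesis
    by (intro Bochner_Integration.integrable_bound[OF int] AE_I2) measurable
qed

lemma has_real_derivative_integral_dominated:
  fixes f :: "real \<Rightarrow> 'a \<Rightarrow> real"
  assumes "e > 0"
    and integrable: "\<And>y. \<bar>y - x\<bar> < e \<Longrightarrow> integrable M (f y)"
    and [measurable]: "f' \<in> borel_measurable M"
    and deriv: "AE t in M. ((\<lambda>y. f y t) has_real_derivative f' t) (at x)"
    and "integrable M w"
    and bound: "\<And>y. \<bar>y - x\<bar> < e \<Longrightarrow> AE t in M. \<bar>f y t - f x t\<bar> \<le> \<bar>y - x\<bar> * w t"
  shows "((\<lambda>y. integral\<^sup>L M (f y)) has_real_derivative integral\<^sup>L M f') (at x)"
proof -
  let ?q = "\<lambda>y t. (f y t - f x t) / (y - x)"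
  have "((\<lambda>y. (integral\<^sup>L M (f y) - integral\<^sup>L M (f x)) / (y - x)) \<longlongrightarrow> integral\<^sup>L M f') (at x)"
  proof (subst tendsto_at_iff_sequentially, intro allI impI)
    fix X :: "nat \<Rightarrow> real" assume X: "\<forall>i. X i \<in> UNIV - {x}" "X \<longlonglongrightarrow> x"
    from X(2) \<open>e > 0\<close> obtain N where N: "\<And>n. n \<ge> N \<Longrightarrow> \<bar>X n - x\<bar> < e"
      unfolding LIMSEQ_iff real_norm_def by blast
    define Y where "Y n = X (n + N)" for n
    have Y: "\<bar>Y n - x\<bar> < e" "Y n \<noteq> x" for n using N X(1) by (auto simp: Y_def)
    have "Y \<longlonglongrightarrow> x" unfolding Y_def using X(2) by (rule LIMSEQ_ignore_initial_segment)
    have int_x: "integrable M (f x)" using integrable[of x] \<open>e > 0\<close> by simp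
    have "(\<lambda>n. integral\<^sup>L M (?q (Y n))) \<longlonglongrightarrow> integral\<^sup>L M f'"
    proof (rule integral_dominated_convergence[where w = w])
      show "?q (Y n) \<in> borel_measurable M" for n
        using integrable[OF Y(1)] int_x by measurable
      show "AE t in M. (\<lambda>n. ?q (Y n) t) \<longlonglongrightarrow> f' t"
        using deriv
      proof eventually_elim
        case (elim t)
        hence "((\<lambda>y. ?q y t) \<longlongrightarrow> f' t) (at x)" by (simp add: has_field_derivative_iff)
        thus ?case using Y(2) \<open>Y \<longlonglongrightarrow> x\<close> by (auto simp: tendsto_at_iff_sequentially o_def)
      qed
      show "AE t in M. norm (?q (Y n) t) \<le> w t" for n
        using bound[OF Y(1)[of n]]
        by eventually_elim (use Y(2)[of n] in \<open>simp add: abs_divide divide_le_eq mult.commute\<close>)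
    qed fact+
    moreover have "integral\<^sup>L M (?q (Y n)) = (integral\<^sup>L M (f (Y n)) - integral\<^sup>L M (f x)) / (Y n - x)" for n
      using integrable[OF Y(1)] int_x by simp
    ultimately have "(\<lambda>n. ((\<lambda>y. (integral\<^sup>L M (f y) - integral\<^sup>L M (f x)) / (y - x)) \<circ> X) (n + N))
        \<longlonglongrightarrow> integral\<^sup>L M f'"
      by (simp only: Y_def o_def)
    thus "((\<lambda>y. (integral\<^sup>L M (f y) - integral\<^sup>L M (f x)) / (y - x)) \<circ> X) \<longlonglongrightarrow> integral\<^sup>L M f'"
      by (rule LIMSEQ_offset)
  qed
  thus ?thesis by (simp add: has_field_derivative_iff)
qed

definition Gamma_log_kernel :: "nat \<Rightarrow> real \<Rightarrow> real \<Rightarrow> real" where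
  "Gamma_log_kernel j x t = indicator {0<..} t * (ln t ^ j * t powr (x - 1) * exp (- t))"

lemma Gamma_log_kernel_measurable [measurable]: "Gamma_log_kernel j x \<in> borel_measurable borel"
  unfolding Gamma_log_kernel_def by measurable

lemma integrable_Gamma_log_kernel:
  assumes "x > 0" shows "integrable lborel (Gamma_log_kernel j x)"
  by (intro Bochner_Integration.integrable_bound[OF integrable_abs_ln_power_Gamma_kernel[OF assms, of j]] AE_I2)
     (auto simp: Gamma_log_kernel_def indicator_def abs_mult power_abs)

lemma integral_Gamma_log_kernel_0:
  assumes "x > 0" shows "integral\<^sup>L lborel (Gamma_log_kernel 0 x) = Gamma x"
proof -
  have nonneg: "Gamma_log_kernel 0 x t \<ge> 0" for t
    by (simp add: Gamma_log_kernel_def indicator_def)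
  have "ennreal (integral\<^sup>L lborel (Gamma_log_kernel 0 x)) = (\<integral>\<^sup>+ t. ennreal (Gamma_log_kernel 0 x t) \<partial>lborel)"
    using integrable_Gamma_log_kernel[OF assms] nonneg by (simp add: nn_integral_eq_integral)
  also have "\<dots> = (\<integral>\<^sup>+ t. ennreal (indicator {0..} t * t powr (x - 1) / exp t) \<partial>lborel)"
    by (intro nn_integral_cong) (auto simp: Gamma_log_kernel_def indicator_def exp_minus field_simps)
  also have "\<dots> = ennreal (Gamma x)" using Gamma_conv_nn_integral_real[OF assms] by simp
  finally show ?thesis
    using Gamma_real_pos[OF assms] nonneg by (simp add: integral_nonneg_AE ennreal_inj)
qed

lemma Gamma_log_kernel_has_real_derivative:
  "((\<lambda>y. Gamma_log_kernel j y t) has_real_derivative Gamma_log_kernel (Suc j) x t) (at x)"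
proof (cases "t > 0")
  case True
  have "((\<lambda>y. ln t ^ j * exp (- t) * t powr (y - 1)) has_real_derivative
      ln t ^ j * exp (- t) * (t powr (x - 1) * ln t)) (at x)"
    using True by (auto intro!: derivative_eq_intros)
  thus ?thesis using True by (simp add: Gamma_log_kernel_def algebra_simps)
qed (simp add: Gamma_log_kernel_def)

lemma has_real_derivative_integral_Gamma_log_kernel:
  assumes "x > 0"
  shows "((\<lambda>y. integral\<^sup>L lborel (Gamma_log_kernel j y))
           has_real_derivative integral\<^sup>L lborel (Gamma_log_kernel (Suc j) x)) (at x)"
proof -
  define e where "e = x / 2"
  have e: "e > 0" "x - e > 0" using assms by (auto simp: e_def)
  define w where "w t = indicator {0<..} t * (\<bar>ln t\<bar> ^ Suc j * t powr (x - e - 1) * exp (- t))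
    + indicator {0<..} t * (\<bar>ln t\<bar> ^ Suc j * t powr (x + e - 1) * exp (- t))" for t
  show ?thesis
  proof (rule has_real_derivative_integral_dominated[where e = e and w = w])
    show "integrable lborel w" unfolding w_def using e assms
      by (intro Bochner_Integration.integrable_add integrable_abs_ln_power_Gamma_kernel) auto
    show "integrable lborel (Gamma_log_kernel j y)" if "\<bar>y - x\<bar> < e" for y
      using that e by (intro integrable_Gamma_log_kernel) auto
    show "AE t in lborel. \<bar>Gamma_log_kernel j y t - Gamma_log_kernel j x t\<bar> \<le> \<bar>y - x\<bar> * w t"
      if "\<bar>y - x\<bar> < e" for y
    proof (intro AE_I2)
      fix t :: real
      show "\<bar>Gamma_log_kernel j y t - Gamma_log_kernel j x t\<bar> \<le> \<bar>y - x\<bar> * w t"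
      proof (cases "t > 0")
        case True
        have "Gamma_log_kernel j y t - Gamma_log_kernel j x t
            = ln t ^ j * exp (- t) * (t powr (y - 1) - t powr (x - 1))"
          using True by (simp add: Gamma_log_kernel_def algebra_simps)
        hence "\<bar>Gamma_log_kernel j y t - Gamma_log_kernel j x t\<bar>
            = \<bar>ln t\<bar> ^ j * exp (- t) * \<bar>t powr (y - 1) - t powr (x - 1)\<bar>"
          by (simp add: abs_mult power_abs)
        also have "\<dots> \<le> \<bar>ln t\<bar> ^ j * exp (- t) *
            (\<bar>y - x\<bar> * (\<bar>ln t\<bar> * (t powr (x - e - 1) + t powr (x + e - 1))))"
          using True that by (intro mult_left_mono abs_powr_diff_le) auto
        also have "\<dots> = \<bar>y - x\<bar> * w t"
          using True by (simp add: w_def algebra_simps)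
        finally show ?thesis .
      qed (simp add: Gamma_log_kernel_def w_def)
    qed
  qed (use e in \<open>auto intro: Gamma_log_kernel_has_real_derivative\<close>)
qed

lemma higher_deriv_Gamma_eq_integral:
  "x > 0 \<Longrightarrow> (deriv ^^ j) Gamma x = integral\<^sup>L lborel (Gamma_log_kernel j x)"
proof (induction j arbitrary: x)
  case 0
  thus ?case by (simp add: integral_Gamma_log_kernel_0)
next
  case (Suc j)
  have "((deriv ^^ j) Gamma has_real_derivative integral\<^sup>L lborel (Gamma_log_kernel (Suc j) x)) (at x)"
  proof (rule has_field_derivative_transform_within_open[where S = "{0<..}"])
    show "((\<lambda>y. integral\<^sup>L lborel (Gamma_log_kernel j y)) has_real_derivative
        integral\<^sup>L lborel (Gamma_log_kernel (Suc j) x)) (at x)"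
      using Suc.prems by (rule has_real_derivative_integral_Gamma_log_kernel)
  qed (use Suc in auto)
  thus ?case by (simp add: DERIV_imp_deriv)
qed

section \<open>Products of uniform random variables\<close>

text \<open>The density of the product of k independent random variables uniform on (0,1].\<close>

definition uniform_prod_density :: "nat \<Rightarrow> real \<Rightarrow> real" where
  "uniform_prod_density k u = (- ln u) ^ (k - 1) / fact (k - 1)"

lemma uniform_prod_density_measurable [measurable]: "uniform_prod_density k \<in> borel_measurable borel"
  unfolding uniform_prod_density_def by measurable

lemma uniform_prod_density_nonneg: "0 < u \<Longrightarrow> u \<le> 1 \<Longrightarrow> uniform_prod_density k u \<ge> 0"
  unfolding uniform_prod_density_def by (auto intro!: divide_nonneg_pos zero_le_power simp: ln_le_zero_iff)

lemma nn_integral_reflect_unit_interval: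
  fixes g :: "real \<Rightarrow> ennreal"
  assumes [measurable]: "g \<in> borel_measurable borel"
  shows "(\<integral>\<^sup>+ y. indicator {0..<1} y * g (1 - y) \<partial>lborel) = (\<integral>\<^sup>+ v. indicator {0<..1} v * g v \<partial>lborel)"
proof -
  have "(\<integral>\<^sup>+ v. indicator {0<..1} v * g v \<partial>lborel) =
        ennreal \<bar>-1\<bar> * (\<integral>\<^sup>+ y. indicator {0<..1} (1 + (-1) * y) * g (1 + (-1) * y) \<partial>lborel)"
    by (rule nn_integral_real_affine) auto
  also have "\<dots> = (\<integral>\<^sup>+ y. indicator {0<..1} (1 - y) * g (1 - y) \<partial>lborel)"
    by simp
  also have "\<dots> = (\<integral>\<^sup>+ y. indicator {0..<1} y * g (1 - y) \<partial>lborel)"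
    by (intro nn_integral_cong) (auto simp: indicator_def)
  finally show ?thesis ..
qed

lemma nn_integral_unit_interval_scale:
  fixes F :: "real \<Rightarrow> ennreal"
  assumes [measurable]: "F \<in> borel_measurable borel" and "y > 0"
  shows "(\<integral>\<^sup>+ u. indicator {0<..1} u * F (y * u) \<partial>lborel)
       = (\<integral>\<^sup>+ v. ennreal (1 / y) * (indicator {0<..y} v * F v) \<partial>lborel)"
proof -
  have "(\<integral>\<^sup>+ v. indicator {0<..y} v * F v \<partial>lborel)
      = ennreal y * (\<integral>\<^sup>+ u. indicator {0<..y} (0 + y * u) * F (0 + y * u) \<partial>lborel)"
    using nn_integral_real_affine[of "\<lambda>v. indicator {0<..y} v * F v" y 0] \<open>y > 0\<close> by simp
  also have "(\<lambda>u. indicator {0<..y} (0 + y * u) * F (0 + y * u)) = (\<lambda>u. indicator {0<..1} u * F (y * u))"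
    using \<open>y > 0\<close> by (auto simp: indicator_def zero_less_mult_iff mult_le_cancel_left1)
  finally have "(\<integral>\<^sup>+ v. ennreal (1 / y) * (indicator {0<..y} v * F v) \<partial>lborel)
      = (ennreal (1 / y) * ennreal y) * (\<integral>\<^sup>+ u. indicator {0<..1} u * F (y * u) \<partial>lborel)"
    by (simp add: nn_integral_cmult mult.assoc)
  also have "ennreal (1 / y) * ennreal y = 1"
    using \<open>y > 0\<close> by (simp flip: ennreal_mult)
  finally show ?thesis by simp
qed

lemma nn_integral_uniform_prod_density_quotient:
  assumes v: "0 < v" "v \<le> 1" and k: "k \<ge> 1"
  shows "(\<integral>\<^sup>+ y. ennreal (uniform_prod_density k (v / y) / y) * indicator {v..1} y \<partial>lborel)
       = ennreal (uniform_prod_density (Suc k) v)"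
proof -
  define F where "F y = (ln y - ln v) ^ k / fact k" for y
  have eq: "uniform_prod_density k (v / y) / y = (ln y - ln v) ^ (k - 1) / fact (k - 1) / y" if "y > 0" for y
    using that v by (simp add: uniform_prod_density_def ln_div)
  have "(\<integral>\<^sup>+ y. ennreal (uniform_prod_density k (v / y) / y) * indicator {v..1} y \<partial>lborel)
      = (\<integral>\<^sup>+y\<in>{v..1}. ennreal ((ln y - ln v) ^ (k - 1) / fact (k - 1) / y) \<partial>lborel)"
    using v by (intro nn_integral_cong) (auto simp: indicator_def eq)
  also have "\<dots> = ennreal (F 1 - F v)"
  proof (rule nn_integral_FTC_Icc)
    fix y assume y: "y \<in> {v..1}"
    hence "y > 0" using v by auto
    show "0 \<le> (ln y - ln v) ^ (k - 1) / fact (k - 1) / y"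
      using y \<open>y > 0\<close> v by (auto intro!: divide_nonneg_pos zero_le_power)
    have "fact k = real k * fact (k - 1)" using k by (cases k) auto
    moreover have "(F has_real_derivative (real k * (ln y - ln v) ^ (k - 1) * (1 / y)) / fact k) (at y)"
      unfolding F_def using \<open>y > 0\<close> by (auto intro!: derivative_eq_intros)
    ultimately show "(F has_real_derivative (ln y - ln v) ^ (k - 1) / fact (k - 1) / y) (at y)"
      using k by (simp add: field_simps)
  qed (use v in auto)
  also have "F 1 - F v = uniform_prod_density (Suc k) v"
    using k by (simp add: F_def uniform_prod_density_def)
  finally show ?thesis .
qed

lemma nn_integral_uniform_prod_density_scale:
  fixes g :: "real \<Rightarrow> ennreal"
  assumes [measurable]: "g \<in> borel_measurable borel" and "y > 0"
  shows "(\<integral>\<^sup>+ u. indicator {0<..1} u * g (y * u) * ennreal (uniform_prod_density k u) \<partial>lborel)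
       = (\<integral>\<^sup>+ v. indicator {0<..y} v * g v * ennreal (uniform_prod_density k (v / y) / y) \<partial>lborel)"
proof -
  have "(\<integral>\<^sup>+ u. indicator {0<..1} u * g (y * u) * ennreal (uniform_prod_density k u) \<partial>lborel)
      = (\<integral>\<^sup>+ u. indicator {0<..1} u * (\<lambda>v. g v * ennreal (uniform_prod_density k (v / y))) (y * u) \<partial>lborel)"
    using \<open>y > 0\<close> by (intro nn_integral_cong) (simp add: mult.assoc)
  also have "\<dots> = (\<integral>\<^sup>+ v. ennreal (1 / y) * (indicator {0<..y} v * (g v * ennreal (uniform_prod_density k (v / y))))
          \<partial>lborel)"
    using \<open>y > 0\<close> by (intro nn_integral_unit_interval_scale) auto
  also have "\<dots> = (\<integral>\<^sup>+ v. indicator {0<..y} v * g v * ennreal (uniform_prod_density k (v / y) / y) \<partial>lborel)"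
  proof (intro nn_integral_cong)
    fix v :: real
    show "ennreal (1 / y) * (indicator {0<..y} v * (g v * ennreal (uniform_prod_density k (v / y))))
        = indicator {0<..y} v * g v * ennreal (uniform_prod_density k (v / y) / y)"
      using \<open>y > 0\<close> uniform_prod_density_nonneg[of "v / y" k]
      by (auto simp: indicator_def ennreal_mult[symmetric] mult.commute mult.left_commute)
  qed
  finally show ?thesis .
qed

lemma nn_integral_uniform_prod_density_Suc:
  fixes g :: "real \<Rightarrow> ennreal"
  assumes [measurable]: "g \<in> borel_measurable borel" and k: "k \<ge> 1"
  shows "(\<integral>\<^sup>+ y. indicator {0<..1} y *
            (\<integral>\<^sup>+ u. indicator {0<..1} u * g (y * u) * ennreal (uniform_prod_density k u) \<partial>lborel) \<partial>lborel)
       = (\<integral>\<^sup>+ v. indicator {0<..1} v * g v * ennreal (uniform_prod_density (Suc k) v) \<partial>lborel)"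
proof -
  \<comment> \<open>substitute v = y u in the inner integral, then swap the order of integration\<close>
  define H where "H v y = (if 0 < v \<and> v \<le> y \<and> y \<le> 1 then 1 else 0) * g v
    * ennreal (uniform_prod_density k (v / y) / y)" for v y :: real
  have [measurable]: "(\<lambda>(v, y). H v y) \<in> borel_measurable (lborel \<Otimes>\<^sub>M lborel)"
    unfolding H_def by measurable
  have inner: "indicator {0<..1} y *
      (\<integral>\<^sup>+ u. indicator {0<..1} u * g (y * u) * ennreal (uniform_prod_density k u) \<partial>lborel)
      = (\<integral>\<^sup>+ v. H v y \<partial>lborel)" for y
  proof (cases "0 < y \<and> y \<le> 1")
    case True
    hence "(\<integral>\<^sup>+ u. indicator {0<..1} u * g (y * u) * ennreal (uniform_prod_density k u) \<partial>lborel)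
        = (\<integral>\<^sup>+ v. indicator {0<..y} v * g v * ennreal (uniform_prod_density k (v / y) / y) \<partial>lborel)"
      by (intro nn_integral_uniform_prod_density_scale) auto
    also have "\<dots> = (\<integral>\<^sup>+ v. H v y \<partial>lborel)"
      using True by (intro nn_integral_cong) (auto simp: H_def indicator_def)
    finally show ?thesis using True by (simp add: indicator_def)
  next
    case False
    then have "H v y = 0" for v unfolding H_def by auto
    with False show ?thesis by (simp add: indicator_def)
  qed
  have outer: "indicator {0<..1} v * g v * ennreal (uniform_prod_density (Suc k) v) = (\<integral>\<^sup>+ y. H v y \<partial>lborel)" for v
  proof (cases "0 < v \<and> v \<le> 1")
    case True
    have "(\<integral>\<^sup>+ y. H v y \<partial>lborel)
        = (\<integral>\<^sup>+ y. g v * (ennreal (uniform_prod_density k (v / y) / y) * indicator {v..1} y) \<partial>lborel)"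
      using True by (intro nn_integral_cong) (auto simp: H_def indicator_def)
    also have "\<dots> = g v * ennreal (uniform_prod_density (Suc k) v)"
      using True k by (simp add: nn_integral_cmult nn_integral_uniform_prod_density_quotient)
    finally show ?thesis using True by (simp add: indicator_def)
  next
    case False
    then have "H v y = 0" for y unfolding H_def by auto
    with False show ?thesis by (simp add: indicator_def)
  qed
  have "(\<integral>\<^sup>+ y. \<integral>\<^sup>+ v. H v y \<partial>lborel \<partial>lborel) = (\<integral>\<^sup>+ v. \<integral>\<^sup>+ y. H v y \<partial>lborel \<partial>lborel)"
    by (rule lborel_pair.Fubini') measurable
  thus ?thesis by (simp only: inner outer)
qed

lemma nn_integral_PiM_insert_unit_cube:
  fixes g :: "real \<Rightarrow> ennreal"
  assumes "finite A" "b \<notin> A" and [measurable]: "g \<in> borel_measurable borel"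
  shows "(\<integral>\<^sup>+ x. indicator (Pi\<^sub>E (insert b A) (\<lambda>_. {0..<1})) x * g (\<Prod>a\<in>insert b A. 1 - x a)
            \<partial>Pi\<^sub>M (insert b A) (\<lambda>_. lborel))
       = (\<integral>\<^sup>+ y. indicator {0..<1} y *
            (\<integral>\<^sup>+ x. indicator (Pi\<^sub>E A (\<lambda>_. {0..<1})) x * g ((1 - y) * (\<Prod>a\<in>A. 1 - x a))
              \<partial>Pi\<^sub>M A (\<lambda>_. lborel)) \<partial>lborel)"
proof -
  interpret product_sigma_finite "\<lambda>_. lborel" by standard
  let ?C = "\<lambda>A. Pi\<^sub>E A (\<lambda>_. {0..<1::real})"
  have split: "indicator (?C (insert b A)) (x(b := y)) * g (\<Prod>a\<in>insert b A. 1 - (x(b := y)) a)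
      = indicator {0..<1} y * (indicator (?C A) x * g ((1 - y) * (\<Prod>a\<in>A. 1 - x a)))"
    if "x \<in> space (Pi\<^sub>M A (\<lambda>_. lborel))" for x y
  proof -
    have "(\<Prod>a\<in>A. 1 - (x(b := y)) a) = (\<Prod>a\<in>A. 1 - x a)"
      using assms by (intro prod.cong) auto
    hence "(\<Prod>a\<in>insert b A. 1 - (x(b := y)) a) = (1 - y) * (\<Prod>a\<in>A. 1 - x a)"
      using assms by simp
    moreover have "x(b := y) \<in> ?C (insert b A) \<longleftrightarrow> y \<in> {0..<1} \<and> x \<in> ?C A"
      using that assms by (auto simp: space_PiM PiE_def extensional_def Pi_def split: if_splits)
    ultimately show ?thesis by (auto simp: indicator_def)
  qed
  have "(\<integral>\<^sup>+ x. indicator (?C (insert b A)) x * g (\<Prod>a\<in>insert b A. 1 - x a) \<partial>Pi\<^sub>M (insert b A) (\<lambda>_. lborel))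
     = (\<integral>\<^sup>+ y. \<integral>\<^sup>+ x. indicator (?C (insert b A)) (x(b := y)) * g (\<Prod>a\<in>insert b A. 1 - (x(b := y)) a)
          \<partial>Pi\<^sub>M A (\<lambda>_. lborel) \<partial>lborel)"
    using assms by (intro product_nn_integral_insert_rev) auto
  also have "\<dots> = (\<integral>\<^sup>+ y. \<integral>\<^sup>+ x. indicator {0..<1} y * (indicator (?C A) x * g ((1 - y) * (\<Prod>a\<in>A. 1 - x a)))
          \<partial>Pi\<^sub>M A (\<lambda>_. lborel) \<partial>lborel)"
    by (intro nn_integral_cong split)
  also have "\<dots> = (\<integral>\<^sup>+ y. indicator {0..<1} y *
      (\<integral>\<^sup>+ x. indicator (?C A) x * g ((1 - y) * (\<Prod>a\<in>A. 1 - x a)) \<partial>Pi\<^sub>M A (\<lambda>_. lborel)) \<partial>lborel)"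
  proof (intro nn_integral_cong)
    fix y :: real
    have "(\<lambda>x. indicator (?C A) x * g ((1 - y) * (\<Prod>a\<in>A. 1 - x a))) \<in> borel_measurable (Pi\<^sub>M A (\<lambda>_. lborel))"
      using assms by measurable
    thus "(\<integral>\<^sup>+ x. indicator {0..<1} y * (indicator (?C A) x * g ((1 - y) * (\<Prod>a\<in>A. 1 - x a)))
        \<partial>Pi\<^sub>M A (\<lambda>_. lborel))
      = indicator {0..<1} y * (\<integral>\<^sup>+ x. indicator (?C A) x * g ((1 - y) * (\<Prod>a\<in>A. 1 - x a)) \<partial>Pi\<^sub>M A (\<lambda>_. lborel))"
      by (rule nn_integral_cmult)
  qed
  finally show ?thesis .
qed

lemma nn_integral_PiM_unit_cube_prod:
  fixes g :: "real \<Rightarrow> ennreal" and A :: "'a set"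
  assumes "finite A" "A \<noteq> {}" "g \<in> borel_measurable borel"
  shows "(\<integral>\<^sup>+ x. indicator (Pi\<^sub>E A (\<lambda>_. {0..<1})) x * g (\<Prod>a\<in>A. 1 - x a) \<partial>Pi\<^sub>M A (\<lambda>_. lborel))
       = (\<integral>\<^sup>+ u. indicator {0<..1} u * g u * ennreal (uniform_prod_density (card A) u) \<partial>lborel)"
  using assms
proof (induction A arbitrary: g rule: finite_ne_induct)
  case (singleton b)
  note [measurable] = singleton.prems
  interpret product_sigma_finite "\<lambda>_. lborel" by standard
  have "(\<integral>\<^sup>+ x. indicator (Pi\<^sub>E {b} (\<lambda>_. {0..<1})) x * g (\<Prod>a\<in>{b}. 1 - x a) \<partial>Pi\<^sub>M {b} (\<lambda>_. lborel))
      = (\<integral>\<^sup>+ x. (\<lambda>z. indicator {0..<1} z * g (1 - z)) (x b) \<partial>Pi\<^sub>M {b} (\<lambda>_. lborel))"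
    by (intro nn_integral_cong) (auto simp: indicator_def space_PiM PiE_def extensional_def)
  also have "\<dots> = (\<integral>\<^sup>+ z. indicator {0..<1} z * g (1 - z) \<partial>lborel)"
    by (rule product_nn_integral_singleton) measurable
  also have "\<dots> = (\<integral>\<^sup>+ v. indicator {0<..1} v * g v \<partial>lborel)"
    by (rule nn_integral_reflect_unit_interval) measurable
  finally show ?case by (simp add: uniform_prod_density_def)
next
  case (insert b A)
  note [measurable] = insert.prems
  define \<Phi> where "\<Phi> z = (\<integral>\<^sup>+ u. indicator {0<..1} u * g (z * u) * ennreal (uniform_prod_density (card A) u) \<partial>lborel)"
    for z
  have [measurable]: "\<Phi> \<in> borel_measurable borel"
    unfolding \<Phi>_def by measurable
  have IH: "(\<integral>\<^sup>+ x. indicator (Pi\<^sub>E A (\<lambda>_. {0..<1})) x * g (z * (\<Prod>a\<in>A. 1 - x a)) \<partial>Pi\<^sub>M A (\<lambda>_. lborel))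
      = \<Phi> z" for z
    unfolding \<Phi>_def by (rule insert.IH) measurable
  have "(\<integral>\<^sup>+ x. indicator (Pi\<^sub>E (insert b A) (\<lambda>_. {0..<1})) x * g (\<Prod>a\<in>insert b A. 1 - x a)
        \<partial>Pi\<^sub>M (insert b A) (\<lambda>_. lborel))
      = (\<integral>\<^sup>+ y. indicator {0..<1} y * \<Phi> (1 - y) \<partial>lborel)"
    using insert.hyps nn_integral_PiM_insert_unit_cube[of A b g] by (simp add: IH)
  also have "\<dots> = (\<integral>\<^sup>+ y. indicator {0<..1} y * \<Phi> y \<partial>lborel)"
    by (rule nn_integral_reflect_unit_interval) measurable
  also have "\<dots> = (\<integral>\<^sup>+ v. indicator {0<..1} v * g v * ennreal (uniform_prod_density (Suc (card A)) v) \<partial>lborel)"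
    unfolding \<Phi>_def using insert.hyps
    by (intro nn_integral_uniform_prod_density_Suc) (auto simp: Suc_le_eq card_gt_0_iff)
  finally show ?case using insert.hyps by simp
qed

lemma nn_integral_vec_unit_cube_prod:
  fixes g :: "real \<Rightarrow> ennreal"
  assumes [measurable]: "g \<in> borel_measurable borel"
  shows "(\<integral>\<^sup>+ x. indicator {x :: real^'d. \<forall>i. 0 \<le> x $ i \<and> x $ i < 1} x * g (\<Prod>i\<in>UNIV. 1 - x $ i) \<partial>lborel)
       = (\<integral>\<^sup>+ u. indicator {0<..1} u * g u * ennreal (uniform_prod_density CARD('d) u) \<partial>lborel)"
proof -
  define S where "S = {x :: real^'d. \<forall>i. 0 \<le> x $ i \<and> x $ i < 1}"
  have Basis: "(Basis :: (real^'d) set) = range (\<lambda>i. axis i 1)"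
    by (auto simp: Basis_vec_def Basis_real_def)
  have inj: "inj (\<lambda>i::'d. axis i (1::real))"
    by (auto simp: inj_def axis_eq_axis)
  have nth: "(\<Sum>b\<in>Basis. y b *\<^sub>R b :: real^'d) $ i = y (axis i 1)" for y i
    by (simp add: cart_eq_inner_axis inner_sum_left_Basis axis_in_Basis_iff)
  have "S = (\<Inter>i. {x. 0 \<le> x $ i} \<inter> {x. x $ i < 1})" by (auto simp: S_def)
  hence [measurable]: "S \<in> sets borel" by simp
  have "(\<integral>\<^sup>+ x. indicator S x * g (\<Prod>i\<in>UNIV. 1 - x $ i) \<partial>lborel)
      = (\<integral>\<^sup>+ y. indicator S (\<Sum>b\<in>Basis. y b *\<^sub>R b) * g (\<Prod>i\<in>UNIV. 1 - (\<Sum>b\<in>Basis. y b *\<^sub>R b) $ i)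
          \<partial>Pi\<^sub>M Basis (\<lambda>b. lborel))"
    by (subst lborel_eq) (simp add: nn_integral_distr)
  also have "\<dots> = (\<integral>\<^sup>+ y. indicator (Pi\<^sub>E Basis (\<lambda>_. {0..<1})) y * g (\<Prod>b\<in>Basis. 1 - y b)
          \<partial>Pi\<^sub>M (Basis :: (real^'d) set) (\<lambda>b. lborel))"
  proof (intro nn_integral_cong)
    fix y :: "real^'d \<Rightarrow> real" assume y: "y \<in> space (Pi\<^sub>M Basis (\<lambda>b. lborel))"
    define v where "v = (\<Sum>b\<in>Basis. y b *\<^sub>R b :: real^'d)"
    have v: "v $ i = y (axis i 1)" for i
      unfolding v_def by (rule nth)
    have "(\<Prod>i\<in>UNIV. 1 - v $ i) = (\<Prod>b\<in>Basis. 1 - y b)"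
      unfolding Basis v by (subst prod.reindex[OF inj]) (simp add: o_def)
    moreover have "v \<in> S \<longleftrightarrow> y \<in> Pi\<^sub>E Basis (\<lambda>_. {0..<1})"
      using y unfolding S_def by (auto simp: v space_PiM PiE_def Pi_def Basis)
    ultimately show "indicator S v * g (\<Prod>i\<in>UNIV. 1 - v $ i)
        = indicator (Pi\<^sub>E Basis (\<lambda>_. {0..<1})) y * g (\<Prod>b\<in>Basis. 1 - y b)"
      by (simp add: indicator_def)
  qed
  also have "\<dots> = (\<integral>\<^sup>+ u. indicator {0<..1} u * g u * ennreal (uniform_prod_density (card (Basis :: (real^'d) set)) u) \<partial>lborel)"
    by (rule nn_integral_PiM_unit_cube_prod) auto
  finally show ?thesis
    using DIM_cart[where 'a = real and 'b = 'd] by (simp add: S_def)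
qed

section \<open>Reduction of \<widehat>I_{d,n} to a one-dimensional integral\<close>

text \<open>The integrand of \<widehat>I_{d,N} after the substitution t = N \<Prod>(1 - x_i).\<close>

definition Ihat_kernel :: "nat \<Rightarrow> real \<Rightarrow> real \<Rightarrow> real" where
  "Ihat_kernel d N t = t ^ (d - 1) * exp (- t) * (ln N - ln t) ^ (d - 1) / fact (d - 1)"

lemma Ihat_kernel_measurable [measurable]: "Ihat_kernel d N \<in> borel_measurable borel"
  unfolding Ihat_kernel_def by measurable

lemma Ihat_kernel_nonneg: "0 < t \<Longrightarrow> t \<le> N \<Longrightarrow> Ihat_kernel d N t \<ge> 0"
  unfolding Ihat_kernel_def by (auto intro!: divide_nonneg_pos mult_nonneg_nonneg zero_le_power)

lemma Ihat_kernel_eq_sum_Gamma_log_kernel: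
  assumes "d \<ge> 1"
  shows "indicator {0<..} t * Ihat_kernel d N t
       = (\<Sum>j\<le>d-1. (-1) ^ j * ln N ^ (d - 1 - j) / (fact j * fact (d - 1 - j)) * Gamma_log_kernel j (real d) t)"
proof (cases "t > 0")
  case True
  have "real d - 1 = real (d - 1)"
    using assms by (simp add: of_nat_diff)
  hence "t powr (real d - 1) = t ^ (d - 1)"
    using True by (simp only: powr_realpow)
  hence kernel: "Gamma_log_kernel j (real d) t = ln t ^ j * t ^ (d - 1) * exp (- t)" for j
    using True by (simp add: Gamma_log_kernel_def)
  have binomial: "(ln N - ln t) ^ (d - 1) = (\<Sum>j\<le>d-1. real (d - 1 choose j) * (- ln t) ^ j * ln N ^ (d - 1 - j))"
    using binomial_ring[of "- ln t" "ln N" "d - 1"] by simp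
  have "Ihat_kernel d N t = (ln N - ln t) ^ (d - 1) * (t ^ (d - 1) * exp (- t) / fact (d - 1))"
    by (simp add: Ihat_kernel_def)
  also have "\<dots> = (\<Sum>j\<le>d-1. real (d - 1 choose j) * (- ln t) ^ j * ln N ^ (d - 1 - j)
      * (t ^ (d - 1) * exp (- t) / fact (d - 1)))"
    unfolding binomial by (rule sum_distrib_right)
  also have "\<dots> = (\<Sum>j\<le>d-1. (-1) ^ j * ln N ^ (d - 1 - j) / (fact j * fact (d - 1 - j)) * Gamma_log_kernel j (real d) t)"
  proof (intro sum.cong refl)
    fix j assume "j \<in> {..d-1}"
    hence choose: "real (d - 1 choose j) = fact (d - 1) / (fact j * fact (d - 1 - j))"
      by (simp add: binomial_fact)
    show "real (d - 1 choose j) * (- ln t) ^ j * ln N ^ (d - 1 - j) * (t ^ (d - 1) * exp (- t) / fact (d - 1))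
        = (-1) ^ j * ln N ^ (d - 1 - j) / (fact j * fact (d - 1 - j)) * Gamma_log_kernel j (real d) t"
      unfolding choose kernel power_minus[of "ln t"] by (simp add: field_simps)
  qed
  finally show ?thesis using True by simp
qed (simp add: Gamma_log_kernel_def)

lemma integrable_Ihat_kernel:
  assumes "d \<ge> 1"
  shows "integrable lborel (\<lambda>t. indicator {0<..} t * Ihat_kernel d N t)"
  using assms unfolding Ihat_kernel_eq_sum_Gamma_log_kernel[OF assms]
  by (intro Bochner_Integration.integrable_sum Bochner_Integration.integrable_mult_right
      integrable_Gamma_log_kernel) auto

lemma integral_Ihat_kernel:
  assumes "d \<ge> 1" "ln N \<noteq> 0"
  shows "integral\<^sup>L lborel (\<lambda>t. indicator {0<..} t * Ihat_kernel d N t)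
       = ln N ^ (d - 1) * (\<Sum>j=0..d-1. (-1) ^ j * (deriv ^^ j) Gamma (real d) / (fact j * fact (d - 1 - j)) / ln N ^ j)"
proof -
  have "integral\<^sup>L lborel (\<lambda>t. indicator {0<..} t * Ihat_kernel d N t)
      = (\<Sum>j\<le>d-1. (-1) ^ j * ln N ^ (d - 1 - j) / (fact j * fact (d - 1 - j)) * (deriv ^^ j) Gamma (real d))"
    using assms unfolding Ihat_kernel_eq_sum_Gamma_log_kernel[OF assms(1)]
    by (subst Bochner_Integration.integral_sum)
      (auto intro!: Bochner_Integration.integrable_mult_right integrable_Gamma_log_kernel
        simp: higher_deriv_Gamma_eq_integral)
  also have "\<dots> = ln N ^ (d - 1) * (\<Sum>j=0..d-1. (-1) ^ j * (deriv ^^ j) Gamma (real d) / (fact j * fact (d - 1 - j)) / ln N ^ j)"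
    unfolding sum_distrib_left atLeast0AtMost
  proof (intro sum.cong refl)
    fix j assume "j \<in> {..d-1}"
    hence "ln N ^ (d - 1 - j) = ln N ^ (d - 1) / ln N ^ j"
      using assms by (intro power_diff) auto
    thus "(-1) ^ j * ln N ^ (d - 1 - j) / (fact j * fact (d - 1 - j)) * (deriv ^^ j) Gamma (real d)
        = ln N ^ (d - 1) * ((-1) ^ j * (deriv ^^ j) Gamma (real d) / (fact j * fact (d - 1 - j)) / ln N ^ j)"
      using assms by (simp add: field_simps)
  qed
  finally show ?thesis .
qed

lemma nn_integral_has_integral_on:
  fixes f :: "'a::euclidean_space \<Rightarrow> real"
  assumes [measurable]: "S \<in> sets borel" "f \<in> borel_measurable borel"
    and "\<And>x. x \<in> S \<Longrightarrow> 0 \<le> f x" "(\<integral>\<^sup>+ x. ennreal (indicator S x * f x) \<partial>lborel) = ennreal r" "0 \<le> r"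
  shows "(f has_integral r) S"
proof -
  have "((\<lambda>x. indicator S x * f x) has_integral r) UNIV"
    using assms by (intro nn_integral_has_integral) (auto simp: indicator_def)
  moreover have "(\<lambda>x. indicator S x * f x) = (\<lambda>x. if x \<in> S then f x else 0)"
    by (auto simp: indicator_def)
  ultimately show ?thesis
    by (simp only: has_integral_restrict_UNIV)
qed

lemma nn_integral_Ihat_kernel_eq_scaled:
  assumes "d \<ge> 1" "N > 0"
  shows "(\<integral>\<^sup>+ t. ennreal (indicator {0<..N} t * Ihat_kernel d N t) \<partial>lborel)
       = ennreal (N ^ d) *
         (\<integral>\<^sup>+ u. indicator {0<..1} u * ennreal (u ^ (d - 1) * exp (- N * u)) * ennreal (uniform_prod_density d u)
            \<partial>lborel)"
proof -
  have "(\<integral>\<^sup>+ t. ennreal (indicator {0<..N} t * Ihat_kernel d N t) \<partial>lborel)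
      = ennreal N * (\<integral>\<^sup>+ u. ennreal (indicator {0<..N} (N * u) * Ihat_kernel d N (N * u)) \<partial>lborel)"
    using nn_integral_real_affine[of "\<lambda>t. ennreal (indicator {0<..N} t * Ihat_kernel d N t)" N 0] assms
    by simp
  also have "(\<lambda>u. ennreal (indicator {0<..N} (N * u) * Ihat_kernel d N (N * u)))
      = (\<lambda>u. ennreal (N ^ (d - 1)) *
           (indicator {0<..1} u * ennreal (u ^ (d - 1) * exp (- N * u)) * ennreal (uniform_prod_density d u)))"
  proof
    fix u :: real
    show "ennreal (indicator {0<..N} (N * u) * Ihat_kernel d N (N * u))
        = ennreal (N ^ (d - 1)) *
          (indicator {0<..1} u * ennreal (u ^ (d - 1) * exp (- N * u)) * ennreal (uniform_prod_density d u))"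
    proof (cases "0 < u \<and> u \<le> 1")
      case True
      have log: "ln N - ln (N * u) = - ln u" using assms True by (simp add: ln_mult)
      have "Ihat_kernel d N (N * u) = N ^ (d - 1) * (u ^ (d - 1) * exp (- N * u) * uniform_prod_density d u)"
        unfolding Ihat_kernel_def uniform_prod_density_def log by (simp add: power_mult_distrib field_simps)
      moreover have "N * u \<in> {0<..N}" using True assms by (auto simp: mult_le_cancel_left1)
      ultimately show ?thesis
        using True assms uniform_prod_density_nonneg[of u d]
        by (simp add: indicator_def ennreal_mult[symmetric] mult.assoc)
    next
      case False
      hence "N * u \<notin> {0<..N}" using assms by (auto simp: zero_less_mult_iff)
      thus ?thesis using False by (auto simp: indicator_def)
    qed
  qed
  finally have "(\<integral>\<^sup>+ t. ennreal (indicator {0<..N} t * Ihat_kernel d N t) \<partial>lborel)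
      = ennreal N * (ennreal (N ^ (d - 1)) *
          (\<integral>\<^sup>+ u. indicator {0<..1} u * ennreal (u ^ (d - 1) * exp (- N * u)) * ennreal (uniform_prod_density d u)
            \<partial>lborel))"
    by (simp add: nn_integral_cmult)
  thus ?thesis
    using assms by (cases d) (simp_all add: ennreal_mult mult.assoc)
qed

lemma integrable_Ihat_kernel_initial:
  assumes "d \<ge> 1"
  shows "integrable lborel (\<lambda>t. indicator {0<..N} t * Ihat_kernel d N t)"
  by (intro Bochner_Integration.integrable_bound[OF integrable_Ihat_kernel[OF assms, of N]] AE_I2)
    (auto simp: indicator_def)

lemma nn_integral_unit_cube_Ihat_integrand:
  assumes "N > 0"
  shows "ennreal (N ^ CARD('d)) *
           (\<integral>\<^sup>+ x. ennreal (indicator {x :: real^'d. \<forall>i. 0 \<le> x $ i \<and> x $ i < 1} x *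
              ((\<Prod>i\<in>UNIV. 1 - x $ i) ^ (CARD('d) - 1) * exp (- N * (\<Prod>i\<in>UNIV. 1 - x $ i)))) \<partial>lborel)
       = ennreal (integral\<^sup>L lborel (\<lambda>t. indicator {0<..N} t * Ihat_kernel CARD('d) N t))"
proof -
  define d where "d = CARD('d)"
  have "d \<ge> 1" by (simp add: d_def Suc_le_eq)
  have "ennreal (integral\<^sup>L lborel (\<lambda>t. indicator {0<..N} t * Ihat_kernel d N t))
      = (\<integral>\<^sup>+ t. ennreal (indicator {0<..N} t * Ihat_kernel d N t) \<partial>lborel)"
    using integrable_Ihat_kernel_initial[OF \<open>d \<ge> 1\<close>]
    by (intro nn_integral_eq_integral[symmetric] AE_I2) (auto simp: indicator_def Ihat_kernel_nonneg)
  also have "\<dots> = ennreal (N ^ d) *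
      (\<integral>\<^sup>+ u. indicator {0<..1} u * ennreal (u ^ (d - 1) * exp (- N * u)) * ennreal (uniform_prod_density d u)
        \<partial>lborel)"
    using \<open>d \<ge> 1\<close> assms by (rule nn_integral_Ihat_kernel_eq_scaled)
  also have "(\<integral>\<^sup>+ u. indicator {0<..1} u * ennreal (u ^ (d - 1) * exp (- N * u)) * ennreal (uniform_prod_density d u)
        \<partial>lborel)
      = (\<integral>\<^sup>+ x. indicator {x :: real^'d. \<forall>i. 0 \<le> x $ i \<and> x $ i < 1} x *
          ennreal ((\<Prod>i\<in>UNIV. 1 - x $ i) ^ (d - 1) * exp (- N * (\<Prod>i\<in>UNIV. 1 - x $ i))) \<partial>lborel)"
    unfolding d_def by (rule nn_integral_vec_unit_cube_prod[symmetric]) simp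
  also have "\<dots> = (\<integral>\<^sup>+ x. ennreal (indicator {x :: real^'d. \<forall>i. 0 \<le> x $ i \<and> x $ i < 1} x *
          ((\<Prod>i\<in>UNIV. 1 - x $ i) ^ (d - 1) * exp (- N * (\<Prod>i\<in>UNIV. 1 - x $ i)))) \<partial>lborel)"
    by (intro nn_integral_cong) (simp add: indicator_def)
  finally show ?thesis
    unfolding d_def by (rule sym)
qed

lemma Ihat_eq_integral_Ihat_kernel:
  fixes dt :: "'d::finite itself"
  assumes "n > 0"
  shows "Ihat dt n = integral\<^sup>L lborel (\<lambda>t. indicator {0<..real n} t * Ihat_kernel CARD('d) (real n) t)"
proof -
  define N where "N = real n"
  have "N > 0" using assms by (simp add: N_def)
  define S where "S = {x :: real^'d. \<forall>i. 0 \<le> x $ i \<and> x $ i < 1}"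
  define f where "f x = (\<Prod>i\<in>UNIV. 1 - x $ i) ^ (CARD('d) - 1) * exp (- N * (\<Prod>i\<in>UNIV. 1 - x $ i))"
    for x :: "real^'d"
  define I where "I = integral\<^sup>L lborel (\<lambda>t. indicator {0<..N} t * Ihat_kernel CARD('d) N t)"
  have "S = (\<Inter>i. {x. 0 \<le> x $ i} \<inter> {x. x $ i < 1})" by (auto simp: S_def)
  hence [measurable]: "S \<in> sets borel" by simp
  have [measurable]: "f \<in> borel_measurable borel"
    unfolding f_def by measurable
  have f_nonneg: "f x \<ge> 0" if "x \<in> S" for x
  proof -
    have "(\<Prod>i\<in>UNIV. 1 - x $ i) \<ge> 0"
      using that unfolding S_def by (auto intro!: prod_nonneg simp: less_imp_le)
    thus ?thesis by (simp add: f_def)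
  qed
  have "I \<ge> 0"
    unfolding I_def by (intro integral_nonneg_AE AE_I2) (auto simp: indicator_def Ihat_kernel_nonneg)
  have "(\<integral>\<^sup>+ x. ennreal (indicator S x * f x) \<partial>lborel)
      = ennreal (1 / N ^ CARD('d)) * (ennreal (N ^ CARD('d)) * (\<integral>\<^sup>+ x. ennreal (indicator S x * f x) \<partial>lborel))"
    using \<open>N > 0\<close> by (simp add: mult.assoc[symmetric] flip: ennreal_mult)
  also have "\<dots> = ennreal (I / N ^ CARD('d))"
    unfolding S_def f_def I_def nn_integral_unit_cube_Ihat_integrand[OF \<open>N > 0\<close>]
    using \<open>I \<ge> 0\<close> \<open>N > 0\<close> by (simp flip: ennreal_mult add: I_def)
  finally have "(f has_integral I / N ^ CARD('d)) S"
    using \<open>I \<ge> 0\<close> \<open>N > 0\<close> f_nonneg by (intro nn_integral_has_integral_on) auto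
  hence "Ihat dt n = N ^ CARD('d) * (I / N ^ CARD('d))"
    unfolding Ihat_def S_def f_def N_def by (simp add: integral_unique)
  thus ?thesis
    using \<open>N > 0\<close> by (simp add: I_def N_def)
qed

section \<open>The tail beyond n\<close>

lemma integrable_one_plus_power_Gamma_kernel:
  "integrable lborel (\<lambda>s::real. indicator {0<..} s * ((1 + s) ^ m * exp (- s)))"
proof -
  have "indicator {0<..} s * ((1 + s) ^ m * exp (- s))
      = (\<Sum>k\<le>m. real (m choose k) * (indicator {0<..} s * (s powr (real (k + 1) - 1) * exp (- s))))"
    for s :: real
  proof (cases "s > 0")
    case True
    have "(1 + s) ^ m = (\<Sum>k\<le>m. real (m choose k) * s ^ k)"
      using binomial_ring[of s 1 m] by (simp add: add.commute)
    thus ?thesis using True by (simp add: sum_distrib_right powr_realpow indicator_def mult.assoc)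
  qed (simp add: indicator_def)
  thus ?thesis
    by (simp only:) (intro Bochner_Integration.integrable_sum Bochner_Integration.integrable_mult_right
        integrable_Gamma_kernel, simp)
qed

lemma abs_Ihat_kernel_le:
  assumes "N \<ge> 1" and "t > N"
  shows "\<bar>Ihat_kernel d N t\<bar> \<le> exp (- N) / fact (d - 1) * ((1 + (t - N)) ^ (2 * (d - 1)) * exp (- (t - N)))"
proof -
  have "N > 0" "t > 0" using assms by auto
  have "ln t - ln N = ln (t / N)" using \<open>N > 0\<close> \<open>t > 0\<close> by (simp add: ln_div)
  also have "\<dots> \<le> t / N - 1" using \<open>N > 0\<close> \<open>t > 0\<close> by (intro ln_le_minus_one) simp
  finally have log: "ln t - ln N \<le> (t - N) / N" using \<open>N > 0\<close> by (simp add: field_simps)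
  have "ln t - ln N \<ge> 0" using assms \<open>N > 0\<close> by simp
  have "t \<le> N * (1 + (t - N))"
    using mult_right_mono[of 1 N "t - N"] assms by (simp add: algebra_simps)
  hence "t / N \<le> 1 + (t - N)" using \<open>N > 0\<close> by (simp add: divide_le_eq mult.commute)
  have "t * (ln t - ln N) \<le> (t / N) * (t - N)"
    using mult_left_mono[OF log, of t] \<open>t > 0\<close> by simp
  also have "\<dots> \<le> (1 + (t - N)) * (1 + (t - N))"
    using \<open>t / N \<le> 1 + (t - N)\<close> assms by (intro mult_mono) auto
  finally have key: "t * (ln t - ln N) \<le> (1 + (t - N)) ^ 2" by (simp add: power2_eq_square)
  have "\<bar>Ihat_kernel d N t\<bar> = (t * (ln t - ln N)) ^ (d - 1) * exp (- t) / fact (d - 1)"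
    using \<open>ln t - ln N \<ge> 0\<close> \<open>t > 0\<close>
    by (simp add: Ihat_kernel_def abs_mult power_abs power_mult_distrib abs_minus_commute)
  also have "\<dots> \<le> ((1 + (t - N)) ^ 2) ^ (d - 1) * exp (- t) / fact (d - 1)"
    using key \<open>ln t - ln N \<ge> 0\<close> \<open>t > 0\<close> by (intro divide_right_mono mult_right_mono power_mono) auto
  also have "exp (- t) = exp (- N) * exp (- (t - N))"
    by (simp flip: exp_add)
  also have "((1 + (t - N)) ^ 2) ^ (d - 1) * (exp (- N) * exp (- (t - N))) / fact (d - 1)
      = exp (- N) / fact (d - 1) * ((1 + (t - N)) ^ (2 * (d - 1)) * exp (- (t - N)))"
    by (simp add: power_mult field_simps)
  finally show ?thesis .
qed

lemma
  assumes "N \<ge> 1"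
  shows integrable_Ihat_kernel_tail: "integrable lborel (\<lambda>t. indicator {N<..} t * Ihat_kernel d N t)"
    and abs_integral_Ihat_kernel_tail_le:
      "\<bar>integral\<^sup>L lborel (\<lambda>t. indicator {N<..} t * Ihat_kernel d N t)\<bar>
         \<le> exp (- N) / fact (d - 1) *
           integral\<^sup>L lborel (\<lambda>s::real. indicator {0<..} s * ((1 + s) ^ (2 * (d - 1)) * exp (- s)))"
proof -
  define h where "h = (\<lambda>s::real. indicator {0<..} s * ((1 + s) ^ (2 * (d - 1)) * exp (- s)))"
  define c where "c = exp (- N) / fact (d - 1)"
  have "integrable lborel h"
    unfolding h_def by (rule integrable_one_plus_power_Gamma_kernel)
  hence shifted: "integrable lborel (\<lambda>t. c * h (t - N))"
    using lborel_integrable_real_affine[of h 1 "- N"] by simp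
  have bound: "\<bar>indicator {N<..} t * Ihat_kernel d N t\<bar> \<le> c * h (t - N)" for t
    using abs_Ihat_kernel_le[OF assms, of t] assms
    by (cases "t > N") (auto simp: c_def h_def indicator_def)
  show int: "integrable lborel (\<lambda>t. indicator {N<..} t * Ihat_kernel d N t)"
    by (intro Bochner_Integration.integrable_bound[OF shifted] AE_I2)
      (use bound in \<open>auto intro: order_trans[OF _ abs_ge_self]\<close>)
  have "\<bar>integral\<^sup>L lborel (\<lambda>t. indicator {N<..} t * Ihat_kernel d N t)\<bar>
      \<le> integral\<^sup>L lborel (\<lambda>t. c * h (t - N))"
    using int shifted bound by (intro integral_abs_bound_integral) auto
  also have "\<dots> = c * integral\<^sup>L lborel h"
    using lborel_integral_real_affine[of 1 h "- N"] by simp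
  finally show "\<bar>integral\<^sup>L lborel (\<lambda>t. indicator {N<..} t * Ihat_kernel d N t)\<bar>
         \<le> exp (- N) / fact (d - 1) *
           integral\<^sup>L lborel (\<lambda>s::real. indicator {0<..} s * ((1 + s) ^ (2 * (d - 1)) * exp (- s)))"
    by (simp add: c_def h_def)
qed

lemma Ihat_minus_main_term_eq_tail:
  fixes dt :: "'d::finite itself"
  defines "d \<equiv> CARD('d)"
  assumes "n \<ge> 2"
  shows "Ihat dt n - ln (real n) ^ (d - 1) *
            (\<Sum>j=0..d-1. (-1) ^ j * (deriv ^^ j) Gamma (real d) / (fact j * fact (d - 1 - j)) / ln (real n) ^ j)
       = - integral\<^sup>L lborel (\<lambda>t. indicator {real n<..} t * Ihat_kernel d (real n) t)"
proof -
  have "d \<ge> 1" by (simp add: d_def Suc_le_eq)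
  have "real n \<ge> 2" using assms by simp
  hence "ln (real n) \<noteq> 0" by simp
  have "integral\<^sup>L lborel (\<lambda>t. indicator {0<..} t * Ihat_kernel d (real n) t)
      = integral\<^sup>L lborel (\<lambda>t. indicator {0<..real n} t * Ihat_kernel d (real n) t
          + indicator {real n<..} t * Ihat_kernel d (real n) t)"
    using \<open>real n \<ge> 2\<close> by (intro Bochner_Integration.integral_cong) (auto simp: indicator_def)
  also have "\<dots> = Ihat dt n + integral\<^sup>L lborel (\<lambda>t. indicator {real n<..} t * Ihat_kernel d (real n) t)"
    using \<open>d \<ge> 1\<close> \<open>real n \<ge> 2\<close> assms
    by (subst Bochner_Integration.integral_add)
      (auto simp: d_def Ihat_eq_integral_Ihat_kernel integrable_Ihat_kernel_tail integrable_Ihat_kernel_initial)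
  finally show ?thesis
    using integral_Ihat_kernel[OF \<open>d \<ge> 1\<close> \<open>ln (real n) \<noteq> 0\<close>] by simp
qed

lemma Ihat_minus_main_term_bigo_exp:
  fixes dt :: "'d::finite itself"
  defines "d \<equiv> CARD('d)"
  shows "(\<lambda>n::nat. Ihat dt n - ln (real n) ^ (d - 1) *
            (\<Sum>j=0..d-1. (-1) ^ j * (deriv ^^ j) Gamma (real d) / (fact j * fact (d - 1 - j)) / ln (real n) ^ j))
         \<in> O(\<lambda>n. exp (- real n))"
proof (rule bigoI)
  define C where "C = integral\<^sup>L lborel (\<lambda>s::real. indicator {0<..} s * ((1 + s) ^ (2 * (d - 1)) * exp (- s)))
    / fact (d - 1)"
  show "\<forall>\<^sub>F n in at_top. norm (Ihat dt n - ln (real n) ^ (d - 1) *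
            (\<Sum>j=0..d-1. (-1) ^ j * (deriv ^^ j) Gamma (real d) / (fact j * fact (d - 1 - j)) / ln (real n) ^ j))
          \<le> C * norm (exp (- real n))"
    using eventually_ge_at_top[of "2::nat"]
  proof eventually_elim
    case (elim n)
    thus ?case
      using abs_integral_Ihat_kernel_tail_le[of "real n" d] unfolding C_def d_def
      by (subst Ihat_minus_main_term_eq_tail) (simp_all add: mult.commute)
  qed
qed

lemma exp_minus_bigo_power_mult_ln_exp:
  "(\<lambda>n::nat. exp (- real n)) \<in> O(\<lambda>n. (real n * ln (real n)) ^ k * exp (- real n))"
proof (rule bigoI[where c = 1])
  show "\<forall>\<^sub>F n in at_top. norm (exp (- real n)) \<le> 1 * norm ((real n * ln (real n)) ^ k * exp (- real n))"
    using eventually_ge_at_top[of "3::nat"]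
  proof eventually_elim
    case (elim n)
    have "exp 1 \<le> real n" using exp_le elim by linarith
    hence "ln (real n) \<ge> 1" using elim by (subst ln_ge_iff) auto
    hence "1 \<le> real n * ln (real n)"
      using elim mult_mono[of 1 "real n" 1 "ln (real n)"] by simp
    hence "1 \<le> (real n * ln (real n)) ^ k"
      by (rule one_le_power)
    thus ?case
      using mult_right_mono[of 1 "(real n * ln (real n)) ^ k" "exp (- real n)"] by (simp add: abs_mult)
  qed
qed

theorem lemmaL:
  fixes dt :: "'d::finite itself"
  defines "d \<equiv> CARD('d)"
  shows "(\<lambda>n::nat. Ihat dt n -
            ln (real n) ^ (d - 1) *
            (\<Sum>j=0..d-1. (-1) ^ j * (deriv ^^ j) Gamma (real d) / (fact j * fact (d - 1 - j))
                          / ln (real n) ^ j))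
         \<in> O(\<lambda>n. (real n * ln (real n)) ^ (d - 1) * exp (- real n))"
  unfolding d_def
  by (rule landau_o.big_trans[OF Ihat_minus_main_term_bigo_exp exp_minus_bigo_power_mult_ln_exp])

end
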